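(* Let $\mathcal{A}=(A_1,\dots,A_4)\in H^0(\bigwedge^2\mathcal{F}\otimes\mathcal{E}\otimes\det\mathcal{E}^\vee)$, let $p\in\mathbb{P}^1$ with uniformizer $u$, and fix $1\le I<J\le5$, $1\le K\le4$. Suppose that (i) $a^{(K)}_{IJ}\equiv0\pmod{u^2}$; (ii) $a^{(k)}_{IJ}\equiv0\pmod u$ for all $1\le k\le4$; (iii) $a^{(K)}_{Ij}\equiv0\pmod u$ for all $1\le j\le5$; (iv) $a^{(K)}_{iJ}\equiv0\pmod u$ for all $1\le i\le5$. Then $\mathcal{A}$ is singular above $p$.
   Context: Work over $\mathbb{C}$. Fix $g\ge0$, $N=g+4$, $\mathcal{E}\cong\bigoplus_{k=1}^4\mathcal{O}_{\mathbb{P}^1}(e_k)$ with $e_1\le\dots\le e_4$, $\sum e_k=N$, and $\mathcal{F}\cong\bigoplus_{i=1}^5\mathcal{O}(f_i)$ with $f_1\le\dots\le f_5$, $\sum f_i=2N$, with these splittings fixed; $d^{(k)}_{ij}=f_i+f_j+e_k-N$. A section $\mathcal{A}\in H^0(\bigwedge^2\mathcal{F}\otimes\mathcal{E}\otimes\det\mathcal{E}^\vee)$ is a quadruple $(A_1,\dots,A_4)$ of $5\times5$ alternating matrices whose $(i,j)$ entry $a^{(k)}_{ij}$ of $A_k$ is a homogeneous form in $\mathbb{C}[s,t]$ of degree $d^{(k)}_{ij}$ (zero if this is negative), $a^{(k)}_{ji}=-a^{(k)}_{ij}$. Let $\mathcal{A}(\mathbf{x})=\sum_k A_kx_k$, and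 let $C_{\mathcal{A}}\subset\mathbb{P}(\mathcal{E})$ (fiber coordinates $x_1,\dots,x_4$) be the closed subscheme cut out by the five $4\times4$ principal sub-Pfaffians of $\mathcal{A}(\mathbf{x})$. $\mathcal{A}$ is smooth at a point $P\in C_{\mathcal{A}}$ if the Zariski tangent space of $C_{\mathcal{A}}$ at $P$ is 1-dimensional, and singular at $P$ otherwise; $\mathcal{A}$ is singular above $p\in\mathbb{P}^1$ if it is singular at some point of $C_{\mathcal{A}}$ lying over $p$. For a form $a$ and a uniformizer (linear form) $u$ at $p$, $a\equiv0\pmod{u^m}$ means $u^m$ divides $a$. *)

theory Defs
  imports "HOL-Analysis.Analysis" "HOL-Computational_Algebra.Polynomial" "Jordan_Normal_Form.Matrix_Kernel"
begin

text \<open>The polynomial ring C[s,t] is represented as (C[t])[s], i.e. the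
  type complex poly poly: the outer variable is s, the inner one is t.\<close>

type_synonym bform = "complex poly poly"

definition var_s :: bform where "var_s = [:0, 1:]"
definition var_t :: bform where "var_t = [:[:0, 1:]:]"

definition lin_form :: "complex \<Rightarrow> complex \<Rightarrow> bform" where
  "lin_form \<alpha> \<beta> = Polynomial.smult [:\<alpha>:] var_s + Polynomial.smult [:\<beta>:] var_t"

definition eval2 :: "bform \<Rightarrow> complex \<Rightarrow> complex \<Rightarrow> complex" where
  "eval2 P s t = poly (poly P [:s:]) t"

definition hom_form :: "int \<Rightarrow> bform \<Rightarrow> bool" where
  "hom_form d P \<longleftrightarrow> (if d < 0 then P = 0 else
     (\<forall>i. coeff P i = (if i \<le> nat d then monom (coeff (coeff P i) (nat d - i)) (nat d - i) else 0)))"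

definition uniformizer :: "bform \<Rightarrow> complex \<Rightarrow> complex \<Rightarrow> bool" where
  "uniformizer u s0 t0 \<longleftrightarrow> (\<exists>\<alpha> \<beta>. (\<alpha>, \<beta>) \<noteq> (0, 0) \<and> \<alpha> * s0 + \<beta> * t0 = 0 \<and> u = lin_form \<alpha> \<beta>)"

text \<open>The data: a k i j is the (i,j) entry of A_k, indices k in {1..4}, i,j in {1..5}.\<close>
definition is_section ::
  "nat \<Rightarrow> (nat \<Rightarrow> int) \<Rightarrow> (nat \<Rightarrow> int) \<Rightarrow> (nat \<Rightarrow> nat \<Rightarrow> nat \<Rightarrow> bform) \<Rightarrow> bool" where
  "is_section g e f a \<longleftrightarrow>
     (\<forall>k\<in>{1..4}. \<forall>i\<in>{1..5}. \<forall>j\<in>{1..5}.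
        hom_form (f i + f j + e k - (int g + 4)) (a k i j) \<and> a k j i = - a k i j)"

text \<open>Points of the cone over P(E): z 0 = s, z 1 = t, z (k+1) = x_k for k = 1..4.
  Entry (i,j) of A(x) evaluated at such a point.\<close>
definition Aentry :: "(nat \<Rightarrow> nat \<Rightarrow> nat \<Rightarrow> bform) \<Rightarrow> nat \<Rightarrow> nat \<Rightarrow> (nat \<Rightarrow> complex) \<Rightarrow> complex" where
  "Aentry a i j z = (\<Sum>k=1..4. eval2 (a k i j) (z 0) (z 1) * z (k + 1))"

definition subpf :: "(nat \<Rightarrow> nat \<Rightarrow> nat \<Rightarrow> bform) \<Rightarrow> nat \<Rightarrow> (nat \<Rightarrow> complex) \<Rightarrow> complex" where
  "subpf a m z = (let l = sorted_list_of_set ({1..5} - {m}); M = (\<lambda>i j. Aentry a (l!i) (l!j) z) in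
      M 0 1 * M 2 3 - M 0 2 * M 1 3 + M 0 3 * M 1 2)"

definition pdiff :: "((nat \<Rightarrow> complex) \<Rightarrow> complex) \<Rightarrow> nat \<Rightarrow> (nat \<Rightarrow> complex) \<Rightarrow> complex" where
  "pdiff F v z = deriv (\<lambda>w. F (z(v := w))) (z v)"

definition jac :: "(nat \<Rightarrow> nat \<Rightarrow> nat \<Rightarrow> bform) \<Rightarrow> (nat \<Rightarrow> complex) \<Rightarrow> complex mat" where
  "jac a z = mat 5 6 (\<lambda>(m, v). pdiff (subpf a (m + 1)) v z)"

text \<open>P(E) is the quotient of
  (C^2 - 0) x (C^4 - 0) by the free action of the torus (C^*)^2,
  (l,m).(s,t,x) = (l s, l t, m l^(-e_k) x_k), which is a smooth morphism with
  2-dimensional fibres; the five sub-Pfaffians are bihomogeneous for this grading.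
  Hence the Zariski tangent space of C_A at the image point has dimension
  dim ker(Jacobian) - 2.\<close>
definition on_CA :: "(nat \<Rightarrow> nat \<Rightarrow> nat \<Rightarrow> bform) \<Rightarrow> (nat \<Rightarrow> complex) \<Rightarrow> bool" where
  "on_CA a z \<longleftrightarrow> (z 0, z 1) \<noteq> (0, 0) \<and> (\<exists>k\<in>{1..4}. z (k + 1) \<noteq> 0)
       \<and> (\<forall>m\<in>{1..5}. subpf a m z = 0)"

definition tangent_dim :: "(nat \<Rightarrow> nat \<Rightarrow> nat \<Rightarrow> bform) \<Rightarrow> (nat \<Rightarrow> complex) \<Rightarrow> nat" where
  "tangent_dim a z = kernel_dim (jac a z) - 2"

definition singular_at :: "(nat \<Rightarrow> nat \<Rightarrow> nat \<Rightarrow> bform) \<Rightarrow> (nat \<Rightarrow> complex) \<Rightarrow> bool" where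
  "singular_at a z \<longleftrightarrow> on_CA a z \<and> tangent_dim a z \<noteq> 1"

definition singular_above :: "(nat \<Rightarrow> nat \<Rightarrow> nat \<Rightarrow> bform) \<Rightarrow> complex \<Rightarrow> complex \<Rightarrow> bool" where
  "singular_above a s0 t0 \<longleftrightarrow>
     (\<exists>z. (\<exists>c. c \<noteq> 0 \<and> z 0 = c * s0 \<and> z 1 = c * t0) \<and> singular_at a z)"

end

theory Submission
  imports Defs
begin

text \<open>Take the point z over p whose fibre coordinate is the K-th basis vector. There
  A(z) = A_K(p), whose I-th and J-th rows and columns vanish, so every 4x4 principal
  sub-Pfaffian (a sum of products of two entries covering four indices) vanishes at z.
  In a sub-Pfaffian that omits neither I nor J, every term is a product of two entries
  vanishing at z, except for the (I,J) entry times a complementary one. Its differential at z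
  is therefore a multiple of d a_IJ(z), which is zero because every a^(k)_IJ vanishes at p and
  a^(K)_IJ vanishes there to second order. So three of the five rows of the Jacobian vanish,
  its kernel has dimension at least 4, and the tangent space of C_A at z has dimension at
  least 2.\<close>

lemma kernel_dim_ge_cols_minus_rows:
  fixes A :: "'a :: field mat"
  assumes A: "A \<in> carrier_mat nr nc"
  shows "nc - nr \<le> kernel_dim A"
proof -
  have G: "gauss_jordan_single A \<in> carrier_mat nr nc"
    and ref: "row_echelon_form (gauss_jordan_single A)"
    using gauss_jordan_single[OF A refl] by blast+
  have "card {i. i < nr \<and> row (gauss_jordan_single A) i \<noteq> 0\<^sub>v nc} \<le> card {..<nr}"
    by (rule card_mono) auto
  then show ?thesis
    using find_base_vectors(5)[OF ref G] A by (simp add: kernel_dim_code)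
qed

lemma kernel_dim_eq_if_mat_kernel_eq:
  "mat_kernel A = mat_kernel B \<Longrightarrow> dim_col A = dim_col B \<Longrightarrow> kernel_dim A = kernel_dim B"
  by (simp add: kernel_dim_def)

lemma mult_mat_vec_eq_0_iff:
  assumes "A \<in> carrier_mat nr nc"
  shows "A *\<^sub>v v = 0\<^sub>v nr \<longleftrightarrow> (\<forall>i<nr. row A i \<bullet> v = 0)"
  using assms by (auto simp: vec_eq_iff)

lemma kernel_dim_ge_if_rows_zero_outside:
  fixes A :: "'a :: field mat"
  assumes A: "A \<in> carrier_mat nr nc" and R: "R \<subseteq> {..<nr}"
    and zero: "\<And>i. i < nr \<Longrightarrow> i \<notin> R \<Longrightarrow> row A i = 0\<^sub>v nc"
  shows "nc - card R \<le> kernel_dim A"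
proof -
  define rs where "rs = sorted_list_of_set R"
  have R_fin: "finite R" using R finite_subset by blast
  define B where "B = mat_of_rows nc (map (row A) rs)"
  have B: "B \<in> carrier_mat (card R) nc"
    by (metis B_def length_map length_sorted_list_of_set mat_of_rows_carrier(1) rs_def)
  have "A *\<^sub>v v = 0\<^sub>v nr \<longleftrightarrow> B *\<^sub>v v = 0\<^sub>v (card R)" if v: "v \<in> carrier_vec nc" for v
  proof -
    have "(\<forall>i<nr. row A i \<bullet> v = 0) \<longleftrightarrow> (\<forall>i\<in>R. row A i \<bullet> v = 0)"
      using R zero v by auto
    also have "\<dots> \<longleftrightarrow> (\<forall>i<length rs. row A (rs ! i) \<bullet> v = 0)"
      using R_fin by (metis in_set_conv_nth rs_def set_sorted_list_of_set)
    also have "\<dots> \<longleftrightarrow> (\<forall>i<card R. row B i \<bullet> v = 0)"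
    proof -
      have "row B i = row A (rs ! i)" if "i < card R" for i
        using that A R_fin by (auto simp: B_def rs_def intro!: mat_of_rows_row)
      then show ?thesis using R_fin by (simp add: rs_def)
    qed
    finally show ?thesis by (simp add: mult_mat_vec_eq_0_iff[OF A] mult_mat_vec_eq_0_iff[OF B])
  qed
  then have "mat_kernel A = mat_kernel B"
    using A B by (auto simp: mat_kernel_def)
  then have "kernel_dim A = kernel_dim B"
    using A B by (intro kernel_dim_eq_if_mat_kernel_eq) auto
  then show ?thesis using kernel_dim_ge_cols_minus_rows[OF B] by simp
qed

lemma eval2_mult [simp]: "eval2 (P * Q) s t = eval2 P s t * eval2 Q s t"
  by (simp add: eval2_def)

lemma eval2_power [simp]: "eval2 (P ^ n) s t = eval2 P s t ^ n"
  by (induct n) (simp_all add: eval2_def)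

lemma eval2_lin_form [simp]: "eval2 (lin_form \<alpha> \<beta>) s t = \<alpha> * s + \<beta> * t"
  by (simp add: eval2_def lin_form_def var_s_def var_t_def)

lemma eval2_eq_sum: "eval2 P s t = (\<Sum>i\<le>degree P. poly (coeff P i) t * s ^ i)"
proof -
  have "eval2 P s t = poly (\<Sum>i\<le>degree P. coeff P i * [:s:] ^ i) t"
    by (simp add: eval2_def poly_altdef)
  also have "\<dots> = (\<Sum>i\<le>degree P. poly (coeff P i) t * s ^ i)"
    by (simp add: poly_sum poly_monom)
  finally show ?thesis .
qed

lemma field_differentiable_eval2:
  assumes "\<sigma> field_differentiable at x" "\<tau> field_differentiable at x"
  shows "(\<lambda>w. eval2 P (\<sigma> w) (\<tau> w)) field_differentiable at x"
proof -
  have "(\<lambda>w. poly c (\<tau> w)) field_differentiable at x" for c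
    using field_differentiable_compose[OF assms(2), of "poly c"]
    by (simp add: o_def) (meson poly_DERIV field_differentiable_def)
  then show ?thesis unfolding eval2_eq_sum
    by (intro field_differentiable_sum field_differentiable_mult field_differentiable_power assms)
qed

lemma eval2_eq_0_if_uniformizer_dvd:
  assumes "uniformizer u s0 t0" "u dvd P"
  shows "eval2 P s0 t0 = 0"
  using assms by (auto simp: uniformizer_def elim!: dvdE)

lemma has_field_derivative_eval2_if_uniformizer_square_dvd:
  assumes "uniformizer u (\<sigma> x) (\<tau> x)" "u ^ 2 dvd P"
    and \<sigma>: "(\<sigma> has_field_derivative \<sigma>') (at x)" and \<tau>: "(\<tau> has_field_derivative \<tau>') (at x)"
  shows "((\<lambda>w. eval2 P (\<sigma> w) (\<tau> w)) has_field_derivative 0) (at x)"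
proof -
  obtain \<alpha> \<beta> where root: "\<alpha> * \<sigma> x + \<beta> * \<tau> x = 0" and u: "u = lin_form \<alpha> \<beta>"
    using assms(1) unfolding uniformizer_def by blast
  obtain Q where P: "P = u ^ 2 * Q" using assms(2) by blast
  have "(\<lambda>w. eval2 Q (\<sigma> w) (\<tau> w)) field_differentiable at x"
    using \<sigma> \<tau> by (intro field_differentiable_eval2) (auto simp: field_differentiable_def)
  then obtain Q' where Q': "((\<lambda>w. eval2 Q (\<sigma> w) (\<tau> w)) has_field_derivative Q') (at x)"
    unfolding field_differentiable_def by blast
  have "((\<lambda>w. (\<alpha> * \<sigma> w + \<beta> * \<tau> w) ^ 2 * eval2 Q (\<sigma> w) (\<tau> w)) has_field_derivative 0) (at x)"
    by (rule derivative_eq_intros \<sigma> \<tau> Q' refl | simp add: root)+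
  then show ?thesis by (simp add: P u)
qed

lemma has_field_derivative_fun_upd:
  "((\<lambda>w. (z(v := w)) n) has_field_derivative (if n = v then 1 else 0)) F"
  by (cases "n = v") auto

lemma field_differentiable_fun_upd: "(\<lambda>w. (z(v := w)) n) field_differentiable F"
  unfolding field_differentiable_def by (rule exI, rule has_field_derivative_fun_upd)

lemma field_differentiable_Aentry_fun_upd:
  "(\<lambda>w. Aentry a i j (z(v := w))) field_differentiable at x"
  unfolding Aentry_def
  by (intro field_differentiable_sum field_differentiable_mult field_differentiable_eval2
      field_differentiable_fun_upd)

lemma Aentry_eq_if_coords_zero:
  assumes "K \<in> {1..4}" "\<And>k. k \<in> {1..4} \<Longrightarrow> k \<noteq> K \<Longrightarrow> z (k + 1) = 0"
  shows "Aentry a i j z = eval2 (a K i j) (z 0) (z 1) * z (K + 1)"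
proof -
  have "Aentry a i j z = (\<Sum>k\<in>{1..4}. if k = K then eval2 (a K i j) (z 0) (z 1) * z (K + 1) else 0)"
    unfolding Aentry_def using assms(2) by (intro sum.cong) auto
  then show ?thesis using assms(1) by simp
qed

lemma Aentry_fun_upd_has_field_derivative_0:
  assumes unif: "uniformizer u (z 0) (z 1)" and K: "K \<in> {1..4}"
    and square_dvd: "u ^ 2 dvd a K i j" and dvd: "\<forall>k\<in>{1..4}. u dvd a k i j"
    and coords: "\<And>k. k \<in> {1..4} \<Longrightarrow> k \<noteq> K \<Longrightarrow> z (k + 1) = 0"
  shows "((\<lambda>w. Aentry a i j (z(v := w))) has_field_derivative 0) (at (z v))"
proof -
  txt \<open>In the summand k = K the form factor vanishes to second order at p; every other
    summand is a product of two factors vanishing at z.\<close>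
  let ?E = "\<lambda>k w. eval2 (a k i j) ((z(v := w)) 0) ((z(v := w)) 1)"
  have summand: "((\<lambda>w. ?E k w * (z(v := w)) (k + 1)) has_field_derivative 0) (at (z v))"
    if k: "k \<in> {1..4}" for k
  proof -
    have E0: "?E k (z v) = 0"
      using eval2_eq_0_if_uniformizer_dvd[OF unif] dvd k by simp
    show ?thesis
    proof (cases "k = K")
      case True
      have "(?E K has_field_derivative 0) (at (z v))"
        by (rule has_field_derivative_eval2_if_uniformizer_square_dvd
            [OF _ square_dvd has_field_derivative_fun_upd has_field_derivative_fun_upd])
          (use unif in simp)
      from DERIV_mult[OF this has_field_derivative_fun_upd[of z v "k + 1"]] show ?thesis
        using E0 True by simp
    next
      case False
      have "?E k field_differentiable at (z v)"
        by (intro field_differentiable_eval2 field_differentiable_fun_upd)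
      then obtain E' where "(?E k has_field_derivative E') (at (z v))"
        unfolding field_differentiable_def by blast
      from DERIV_mult[OF this has_field_derivative_fun_upd[of z v "k + 1"]] show ?thesis
        using E0 coords[OF k False] by simp
    qed
  qed
  have "((\<lambda>w. \<Sum>k=1..4. ?E k w * (z(v := w)) (k + 1))
      has_field_derivative (\<Sum>k::nat=1..4. 0)) (at (z v))"
    by (rule DERIV_sum) (rule summand)
  then show ?thesis by (simp add: Aentry_def)
qed

definition pf4 :: "(nat \<Rightarrow> nat \<Rightarrow> 'a :: comm_ring) \<Rightarrow> nat \<Rightarrow> nat \<Rightarrow> nat \<Rightarrow> nat \<Rightarrow> 'a" where
  "pf4 M p q r s = M p q * M r s - M p r * M q s + M p s * M q r"

lemma pf4_eq_0_if_zero_row_col: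
  assumes "i \<in> {p, q, r, s}"
    and "\<And>j. j \<in> {p, q, r, s} \<Longrightarrow> M i j = 0" "\<And>j. j \<in> {p, q, r, s} \<Longrightarrow> M j i = 0"
  shows "pf4 M p q r s = 0"
  using assms by (auto simp: pf4_def)

lemma pf4_summand_eq_0:
  fixes M M' :: "nat \<Rightarrow> nat \<Rightarrow> 'a :: comm_ring"
  assumes "distinct [p, q, r, s]" "I \<in> {p, q, r, s}" "J \<in> {p, q, r, s}" "I \<noteq> J"
    and zero: "\<And>i j. i \<in> {p, q, r, s} \<Longrightarrow> j \<in> {p, q, r, s} \<Longrightarrow> i \<in> {I, J} \<or> j \<in> {I, J} \<Longrightarrow>
      M i j = 0"
    and M'_IJ: "M' I J = 0" "M' J I = 0"
  shows "M' p q * M r s + M' r s * M p q = 0"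
proof -
  consider "{p, q} = {I, J}" | "{r, s} = {I, J}" | "M p q = 0" "M r s = 0"
    using assms(1-4) zero by auto
  then show ?thesis
    by cases (use M'_IJ zero in \<open>auto simp: doubleton_eq_iff\<close>)
qed

lemma pf4_has_field_derivative_0:
  assumes deriv: "\<And>i j. ((\<lambda>w. M w i j) has_field_derivative M' i j) (at x)"
    and pqrs: "distinct [p, q, r, s]" "I \<in> {p, q, r, s}" "J \<in> {p, q, r, s}" "I \<noteq> J"
    and zero: "\<And>i j. i \<in> {p, q, r, s} \<Longrightarrow> j \<in> {p, q, r, s} \<Longrightarrow> i \<in> {I, J} \<or> j \<in> {I, J} \<Longrightarrow>
      M x i j = 0"
    and M'_IJ: "M' I J = 0" "M' J I = 0"
  shows "((\<lambda>w. pf4 (M w) p q r s) has_field_derivative 0) (at x)"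
proof -
  have "((\<lambda>w. pf4 (M w) p q r s) has_field_derivative
     M' p q * M x r s + M' r s * M x p q - (M' p r * M x q s + M' q s * M x p r)
     + (M' p s * M x q r + M' q r * M x p s)) (at x)"
    unfolding pf4_def by (rule derivative_eq_intros deriv refl)+
  moreover have "M' p q * M x r s + M' r s * M x p q = 0"
    using pqrs zero M'_IJ by (intro pf4_summand_eq_0[of p q r s I J]) auto
  moreover have "M' p r * M x q s + M' q s * M x p r = 0"
    using pqrs zero M'_IJ by (intro pf4_summand_eq_0[of p r q s I J]) auto
  moreover have "M' p s * M x q r + M' q r * M x p s = 0"
    using pqrs zero M'_IJ by (intro pf4_summand_eq_0[of p s q r I J]) auto
  ultimately show ?thesis by simp
qed

lemma sorted_list_of_set_card_4:
  assumes "card S = 4"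
  obtains p q r s where "sorted_list_of_set S = [p, q, r, s]"
proof -
  obtain xs where xs: "sorted_list_of_set S = xs" by simp
  with assms have "length xs = 4" by auto
  then show thesis using that xs by (auto simp: numeral_eq_Suc length_Suc_conv)
qed

lemma subpf_eq_pf4:
  assumes "m \<in> {1..5}"
  obtains p q r s where "distinct [p, q, r, s]" "{p, q, r, s} = {1..5} - {m}"
    "\<And>z. subpf a m z = pf4 (\<lambda>i j. Aentry a i j z) p q r s"
proof -
  have "card ({1..5::nat} - {m}) = 4" using assms by simp
  then obtain p q r s where pqrs: "sorted_list_of_set ({1..5} - {m}) = [p, q, r, s]"
    by (rule sorted_list_of_set_card_4)
  have "distinct [p, q, r, s]" "set [p, q, r, s] = {1..5} - {m}"
    by (simp_all flip: pqrs)
  moreover have "subpf a m z = pf4 (\<lambda>i j. Aentry a i j z) p q r s" for z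
    unfolding subpf_def Let_def pqrs by (simp add: pf4_def)
  ultimately show ?thesis using that by simp
qed

lemma subpf_eq_0_if_zero_rows:
  assumes "m \<in> {1..5}" "I \<in> {1..5}" "J \<in> {1..5}" "I \<noteq> J"
    and zero: "\<And>i j. i \<in> {1..5} \<Longrightarrow> j \<in> {1..5} \<Longrightarrow> i \<in> {I, J} \<or> j \<in> {I, J} \<Longrightarrow>
      Aentry a i j z = 0"
  shows "subpf a m z = 0"
proof -
  obtain p q r s where pqrs: "{p, q, r, s} = {1..5} - {m}"
    and subpf: "subpf a m z = pf4 (\<lambda>i j. Aentry a i j z) p q r s"
    using subpf_eq_pf4[OF assms(1)] by metis
  obtain i where "i \<in> {I, J}" "i \<in> {p, q, r, s}"
    using pqrs assms(2-4) by blast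
  then show ?thesis
    unfolding subpf using pqrs zero by (intro pf4_eq_0_if_zero_row_col[of i]) auto
qed

lemma pdiff_subpf_eq_0:
  assumes "m \<in> {1..5}" "I \<in> {1..5} - {m}" "J \<in> {1..5} - {m}" "I \<noteq> J"
    and zero: "\<And>i j. i \<in> {1..5} \<Longrightarrow> j \<in> {1..5} \<Longrightarrow> i \<in> {I, J} \<or> j \<in> {I, J} \<Longrightarrow>
      Aentry a i j z = 0"
    and deriv_IJ: "((\<lambda>w. Aentry a I J (z(v := w))) has_field_derivative 0) (at (z v))"
    and deriv_JI: "((\<lambda>w. Aentry a J I (z(v := w))) has_field_derivative 0) (at (z v))"
  shows "pdiff (subpf a m) v z = 0"
proof -
  obtain p q r s where pqrs: "distinct [p, q, r, s]" "{p, q, r, s} = {1..5} - {m}"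
    and subpf: "\<And>z. subpf a m z = pf4 (\<lambda>i j. Aentry a i j z) p q r s"
    using subpf_eq_pf4[OF assms(1)] by metis
  let ?M = "\<lambda>w i j. Aentry a i j (z(v := w))"
  let ?M' = "\<lambda>i j. deriv (\<lambda>w. ?M w i j) (z v)"
  have "((\<lambda>w. pf4 (?M w) p q r s) has_field_derivative 0) (at (z v))"
  proof (rule pf4_has_field_derivative_0)
    show "((\<lambda>w. ?M w i j) has_field_derivative ?M' i j) (at (z v))" for i j
      using DERIV_deriv_iff_field_differentiable field_differentiable_Aentry_fun_upd by blast
    show "?M' I J = 0" "?M' J I = 0"
      using deriv_IJ deriv_JI by (simp_all add: DERIV_imp_deriv)
  qed (use pqrs assms(2-4) zero in auto)
  then show ?thesis
    unfolding pdiff_def subpf by (rule DERIV_imp_deriv)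
qed

lemma singular_at_if_jac_rows_zero:
  assumes "on_CA a z" "I \<in> {1..5}" "J \<in> {1..5}"
    and zero: "\<And>m v. m \<in> {1..5} - {I, J} \<Longrightarrow> v < 6 \<Longrightarrow> pdiff (subpf a m) v z = 0"
  shows "singular_at a z"
proof -
  have jac: "jac a z \<in> carrier_mat 5 6" by (simp add: jac_def)
  have "row (jac a z) i = 0\<^sub>v 6" if "i < 5" "i \<notin> {I - 1, J - 1}" for i
  proof -
    have "i + 1 \<in> {1..5} - {I, J}" using that assms(2,3) by auto
    then show ?thesis using that(1) zero by (intro eq_vecI) (simp_all add: jac_def)
  qed
  then have "6 - card {I - 1, J - 1} \<le> kernel_dim (jac a z)"
    using assms(2,3) by (intro kernel_dim_ge_if_rows_zero_outside[OF jac]) auto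
  moreover have "card {I - 1, J - 1} \<le> 2" by (simp add: card_insert_le_m1)
  ultimately show ?thesis
    using assms(1) by (simp add: singular_at_def tangent_dim_def)
qed

lemma singular_at_coordinate_point:
  assumes sec: "is_section g e f a"
    and z: "(z 0, z 1) \<noteq> (0, 0)" "z (K + 1) \<noteq> 0"
      "\<And>k. k \<in> {1..4} \<Longrightarrow> k \<noteq> K \<Longrightarrow> z (k + 1) = 0"
    and unif: "uniformizer u (z 0) (z 1)"
    and IJK: "I \<in> {1..5}" "J \<in> {1..5}" "I \<noteq> J" "K \<in> {1..4}"
    and square_dvd: "u ^ 2 dvd a K I J"
    and dvd_IJ: "\<forall>k\<in>{1..4}. u dvd a k I J"
    and dvd_row: "\<forall>j\<in>{1..5}. u dvd a K I j"
    and dvd_col: "\<forall>i\<in>{1..5}. u dvd a K i J"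
  shows "singular_at a z"
proof -
  have anti: "\<And>k i j. k \<in> {1..4} \<Longrightarrow> i \<in> {1..5} \<Longrightarrow> j \<in> {1..5} \<Longrightarrow> a k j i = - a k i j"
    using sec unfolding is_section_def by blast
  have "u dvd a K i j" if "i \<in> {1..5}" "j \<in> {1..5}" "i \<in> {I, J} \<or> j \<in> {I, J}" for i j
  proof -
    have "u dvd a K i j \<longleftrightarrow> u dvd a K j i" using anti[OF IJK(4) that(1,2)] by simp
    then show ?thesis using that dvd_row dvd_col by blast
  qed
  then have zero: "Aentry a i j z = 0"
    if "i \<in> {1..5}" "j \<in> {1..5}" "i \<in> {I, J} \<or> j \<in> {I, J}" for i j
    using that Aentry_eq_if_coords_zero[where z = z, OF IJK(4) z(3)]
      eval2_eq_0_if_uniformizer_dvd[OF unif] by simp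
  have "on_CA a z"
    unfolding on_CA_def using z IJK zero by (blast intro: subpf_eq_0_if_zero_rows)
  moreover have "pdiff (subpf a m) v z = 0" if "m \<in> {1..5} - {I, J}" for m v
  proof (rule pdiff_subpf_eq_0)
    show "((\<lambda>w. Aentry a I J (z(v := w))) has_field_derivative 0) (at (z v))"
      using Aentry_fun_upd_has_field_derivative_0
        [where a = a and i = I and j = J, OF unif IJK(4) square_dvd dvd_IJ z(3)] .
    have "a k J I = - a k I J" if "k \<in> {1..4}" for k
      using anti that IJK by blast
    then have "u ^ 2 dvd a K J I" "\<forall>k\<in>{1..4}. u dvd a k J I"
      using square_dvd dvd_IJ IJK(4) by simp_all
    then show "((\<lambda>w. Aentry a J I (z(v := w))) has_field_derivative 0) (at (z v))"
      using Aentry_fun_upd_has_field_derivative_0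
        [where a = a and i = J and j = I, OF unif IJK(4) _ _ z(3)] by blast
  qed (use that IJK zero in auto)
  ultimately show ?thesis
    using IJK(1,2) by (intro singular_at_if_jac_rows_zero)
qed

theorem lemma3p2:
  fixes g :: nat and e f :: "nat \<Rightarrow> int" and a :: "nat \<Rightarrow> nat \<Rightarrow> nat \<Rightarrow> bform"
    and s0 t0 :: complex and u :: bform and I J K :: nat
  assumes e_sorted: "e 1 \<le> e 2" "e 2 \<le> e 3" "e 3 \<le> e 4"
    and e_sum: "(\<Sum>k=1..4. e k) = int g + 4"
    and f_sorted: "f 1 \<le> f 2" "f 2 \<le> f 3" "f 3 \<le> f 4" "f 4 \<le> f 5"
    and f_sum: "(\<Sum>i=1..5. f i) = 2 * (int g + 4)"
    and sec: "is_section g e f a"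
    and p: "(s0, t0) \<noteq> (0, 0)"
    and unif: "uniformizer u s0 t0"
    and IJK: "1 \<le> I" "I < J" "J \<le> 5" "1 \<le> K" "K \<le> 4"
    and h1: "u ^ 2 dvd a K I J"
    and h2: "\<forall>k\<in>{1..4}. u dvd a k I J"
    and h3: "\<forall>j\<in>{1..5}. u dvd a K I j"
    and h4: "\<forall>i\<in>{1..5}. u dvd a K i J"
  shows "singular_above a s0 t0"
proof -
  define z where
    "z = (\<lambda>n. if n = 0 then s0 else if n = 1 then t0 else if n = K + 1 then 1 else (0::complex))"
  have "singular_at a z"
  proof (rule singular_at_coordinate_point[OF sec _ _ _ _ _ _ _ _ h1 h2 h3 h4])
    show "(z 0, z 1) \<noteq> (0, 0)" "uniformizer u (z 0) (z 1)" using p unif by (simp_all add: z_def)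
  qed (use IJK in \<open>auto simp: z_def\<close>)
  then show ?thesis
    unfolding singular_above_def by (intro exI[of _ z] conjI exI[of _ 1]) (auto simp: z_def)
qed

end
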